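(* Let $A\in\mathbb{R}^{n\times n}$, $B\in\mathbb{R}^{n\times m}$ with $m\ge1$ and $(A,B)$ uncontrollable, and let $r_c=r_c(A,B)$ be its zero-norm distance to controllability. Then (1) $r_c\le n-\operatorname{rank}B$ if $\operatorname{rank}B\ge 1$, and $r_c\le n$ if $\operatorname{rank}B=0$; (2) $r_c\ge \min\{|J|: J\subseteq\{1,\dots,n\},\ (A,[B,\ I_n(:,J)])\text{ is controllable}\}$.
   Context: $r_c(A,B)=\min\{\|[\Delta A,\Delta B]\|_0: \Delta A\in\mathbb{R}^{n\times n},\Delta B\in\mathbb{R}^{n\times m},(A+\Delta A,B+\Delta B)\text{ controllable}\}$, where $\|M\|_0$ is the number of nonzero entries of $M$. $I_n(:,J)$ is the submatrix of the $n\times n$ identity matrix consisting of the columns indexed by $J$. Controllability of $(A,B)$ means $\operatorname{rank}[B,AB,\dots,A^{n-1}B]=n$. *)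

theory Defs
  imports "Jordan_Normal_Form.DL_Rank"
begin

text \<open>Matrices are Jordan_Normal_Form matrices of type real mat with explicit dimensions.
Indices are 0-based: the index set {1,...,n} of the paper is rendered as {0..<n}.\<close>

definition mrank :: "nat \<Rightarrow> real mat \<Rightarrow> nat" where
  "mrank n M = vec_space.rank n M"

definition hcat :: "real mat \<Rightarrow> real mat \<Rightarrow> real mat" where
  "hcat M N = mat_of_cols (dim_row M) (cols M @ cols N)"

definition ctrb_mat :: "real mat \<Rightarrow> real mat \<Rightarrow> real mat" where
  "ctrb_mat A B = mat_of_cols (dim_row A) (concat (map (\<lambda>k. cols ((A ^\<^sub>m k) * B)) [0..<dim_row A]))"

definition controllable :: "real mat \<Rightarrow> real mat \<Rightarrow> bool" where
  "controllable A B \<longleftrightarrow> mrank (dim_row A) (ctrb_mat A B) = dim_row A"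

definition nnz :: "real mat \<Rightarrow> nat" where
  "nnz M = card {(i, j). i < dim_row M \<and> j < dim_col M \<and> M $$ (i, j) \<noteq> 0}"

definition rc :: "real mat \<Rightarrow> real mat \<Rightarrow> nat" where
  "rc A B = Inf {nnz (hcat dA dB) | dA dB.
      dA \<in> carrier_mat (dim_row A) (dim_row A) \<and> dB \<in> carrier_mat (dim_row A) (dim_col B) \<and>
      controllable (A + dA) (B + dB)}"

definition id_cols :: "nat \<Rightarrow> nat set \<Rightarrow> real mat" where
  "id_cols n J = mat_of_cols n (map (unit_vec n) (sorted_list_of_set J))"

end

theory Submission
  imports Defs "HOL-Computational_Algebra.Polynomial"
begin

text \<open>
  Lower bound: if (A + dA, B + dB) is controllable and J is the set of rows in which [dA, dB]
  has a nonzero entry, then dA and dB only produce vectors supported on J. So the Krylov space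
  of (A + dA, B + dB) lies in the Krylov space of (A, [B, I(:,J)]), which is therefore
  controllable, while |J| is at most the number of nonzero entries of [dA, dB].

  Upper bound: complete a basis U of the column space of B, chosen among its columns, by unit
  vectors e_q, q \<in> Q, so that |Q| = n - rank B, and pick a column b with b_p \<noteq> 0 for some
  p \<notin> Q. For the nilpotent shift N along the chain p, q_1, ..., q_k the vectors N^s b,
  1 \<le> s \<le> k, are triangular with respect to e_q_1, ..., e_q_k, so together with U they form a
  basis. The determinant of U together with the vectors (eA + N)^s b is a polynomial in e that
  does not vanish at 0, hence it does not vanish at some e \<noteq> 0; as
  (eA + N)^s b = e^s (A + N/e)^s b, the perturbation dA = N/e, which has n - rank B nonzero
  entries, makes (A + dA, B) controllable. If rank B = 0, a single entry of B is changed first.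
\<close>

lemma pow_mat_Suc_left:
  assumes "A \<in> carrier_mat n n"
  shows "A ^\<^sub>m Suc k = A * A ^\<^sub>m k"
proof (induction k)
  case (Suc k)
  have "A ^\<^sub>m Suc (Suc k) = (A * A ^\<^sub>m k) * A" using Suc by simp
  also have "\<dots> = A * (A ^\<^sub>m k * A)" using assms by (intro assoc_mult_mat) auto
  finally show ?case by simp
qed (use assms in simp)

lemma pow_mat_Suc_mult_vec:
  assumes "A \<in> carrier_mat n n" "x \<in> carrier_vec n"
  shows "(A ^\<^sub>m Suc k) *\<^sub>v x = A *\<^sub>v ((A ^\<^sub>m k) *\<^sub>v x)"
  unfolding pow_mat_Suc_left[OF assms(1)] using assms by (intro assoc_mult_mat_vec) auto

lemma smult_mat_mult_vec:
  assumes "A \<in> carrier_mat n nc" "v \<in> carrier_vec nc"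
  shows "(c \<cdot>\<^sub>m A) *\<^sub>v v = c \<cdot>\<^sub>v (A *\<^sub>v v)"
  using assms by (intro eq_vecI) (auto simp: scalar_prod_def sum_distrib_left mult.assoc)

lemma smult_mat_pow_mult_vec:
  fixes A :: "'a::comm_ring_1 mat"
  assumes A: "A \<in> carrier_mat n n" and v: "v \<in> carrier_vec n"
  shows "((c \<cdot>\<^sub>m A) ^\<^sub>m s) *\<^sub>v v = c ^ s \<cdot>\<^sub>v ((A ^\<^sub>m s) *\<^sub>v v)"
proof -
  have "(c \<cdot>\<^sub>m A) ^\<^sub>m s = c ^ s \<cdot>\<^sub>m A ^\<^sub>m s"
  proof (induction s)
    case (Suc s)
    have "(c \<cdot>\<^sub>m A) ^\<^sub>m Suc s = (c ^ s \<cdot>\<^sub>m A ^\<^sub>m s) * (c \<cdot>\<^sub>m A)" using Suc by simp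
    also have "\<dots> = c \<cdot>\<^sub>m (c ^ s \<cdot>\<^sub>m (A ^\<^sub>m s * A))"
      using A by (simp add: mult_smult_assoc_mat[of _ n n] mult_smult_distrib[of _ n n])
    also have "\<dots> = c ^ Suc s \<cdot>\<^sub>m A ^\<^sub>m Suc s" by (rule eq_matI) (auto simp: ac_simps)
    finally show ?case .
  qed (use A in \<open>auto intro!: eq_matI\<close>)
  thus ?thesis using A v smult_mat_mult_vec[of "A ^\<^sub>m s" n n v] by simp
qed

lemma index_mult_mat_vec_eq_sum:
  assumes "A \<in> carrier_mat nr nc" "v \<in> carrier_vec nc" "i < nr"
  shows "(A *\<^sub>v v) $ i = (\<Sum>j = 0..<nc. A $$ (i, j) * v $ j)"
proof -
  have "(A *\<^sub>v v) $ i = row A i \<bullet> v" using assms by simp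
  also have "\<dots> = (\<Sum>j = 0..<nc. A $$ (i, j) * v $ j)"
    unfolding scalar_prod_def using assms by (intro sum.cong) auto
  finally show ?thesis .
qed

lemma index_mult_mat_vec_eq_0:
  assumes "D \<in> carrier_mat n nc" "y \<in> carrier_vec nc" "i < n" "\<And>j. j < nc \<Longrightarrow> D $$ (i, j) = 0"
  shows "(D *\<^sub>v y) $ i = 0"
  using assms by (auto simp: scalar_prod_def intro!: sum.neutral)

lemma hcat_carrier:
  "X \<in> carrier_mat n a \<Longrightarrow> Y \<in> carrier_mat n b \<Longrightarrow> hcat X Y \<in> carrier_mat n (a + b)"
  unfolding hcat_def carrier_mat_def by simp

lemma index_hcat:
  assumes "X \<in> carrier_mat n a" "Y \<in> carrier_mat n b" "i < n" "j < a + b"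
  shows "hcat X Y $$ (i, j) = (if j < a then X $$ (i, j) else Y $$ (i, j - a))"
  using assms unfolding hcat_def by (auto simp: mat_of_cols_index nth_append)

lemma id_cols_carrier: "finite J \<Longrightarrow> id_cols n J \<in> carrier_mat n (card J)"
  unfolding id_cols_def using mat_of_cols_carrier(1)[of n "map (unit_vec n) (sorted_list_of_set J)"]
  by simp

lemma set_cols_hcat_id_cols:
  assumes B: "B \<in> carrier_mat n m" and J: "finite J"
  shows "set (cols (hcat B (id_cols n J))) = set (cols B) \<union> unit_vec n ` J"
proof -
  have ids: "cols (id_cols n J) = map (unit_vec n) (sorted_list_of_set J)"
    unfolding id_cols_def by (rule cols_mat_of_cols) auto
  have "set (cols B @ cols (id_cols n J)) \<subseteq> carrier_vec n"
    using B cols_dim[of B] ids by auto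
  hence "cols (hcat B (id_cols n J)) = cols B @ cols (id_cols n J)"
    unfolding hcat_def using B by simp
  thus ?thesis using ids J by simp
qed

section \<open>Krylov sets and spans\<close>

definition krylov :: "'a::semiring_1 mat \<Rightarrow> 'a vec set \<Rightarrow> nat \<Rightarrow> 'a vec set" where
  "krylov A G k = {(A ^\<^sub>m s) *\<^sub>v g | s g. s < k \<and> g \<in> G}"

lemma krylov_carrier:
  "A \<in> carrier_mat n n \<Longrightarrow> G \<subseteq> carrier_vec n \<Longrightarrow> krylov A G k \<subseteq> carrier_vec n"
  unfolding krylov_def by (blast intro: mult_mat_vec_carrier pow_carrier_mat)

lemma krylov_mono: "k \<le> l \<Longrightarrow> krylov A G k \<subseteq> krylov A G l"
  unfolding krylov_def by force

lemma subset_krylov: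
  assumes "A \<in> carrier_mat n n" "G \<subseteq> carrier_vec n" "0 < k"
  shows "G \<subseteq> krylov A G k"
proof
  fix g assume "g \<in> G"
  moreover have "g = (A ^\<^sub>m 0) *\<^sub>v g" using assms \<open>g \<in> G\<close> by auto
  ultimately show "g \<in> krylov A G k" unfolding krylov_def using assms(3) by blast
qed

lemma mult_mat_vec_krylov:
  assumes A: "A \<in> carrier_mat n n" and G: "G \<subseteq> carrier_vec n" and x: "x \<in> krylov A G k"
  shows "A *\<^sub>v x \<in> krylov A G (Suc k)"
proof -
  obtain s g where sg: "s < k" "g \<in> G" and x: "x = (A ^\<^sub>m s) *\<^sub>v g"
    using x unfolding krylov_def by blast
  have "A *\<^sub>v x = (A ^\<^sub>m Suc s) *\<^sub>v g"
    unfolding x pow_mat_Suc_mult_vec[OF A subsetD[OF G sg(2)]] by (rule refl)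
  thus ?thesis unfolding krylov_def using sg by blast
qed

context vec_space
begin

lemma span_diff:
  assumes "X \<subseteq> carrier_vec n" "x \<in> span X" "y \<in> span X"
  shows "x - y \<in> span X"
proof -
  have "x - y = x + (-1) \<cdot>\<^sub>v y"
    using assms span_closed by auto
  thus ?thesis
    using assms by (simp add: span_add1 smult_in_span)
qed

lemma span_eq_carrier_vecI:
  assumes "Y \<subseteq> carrier_vec n" "X \<subseteq> span Y" "span X = carrier_vec n"
  shows "span Y = carrier_vec n"
  using span_subsetI[OF assms(1,2)] assms(3) span_is_subset2[OF assms(1)] by auto

lemma mult_mat_vec_in_span:
  assumes A: "A \<in> carrier_mat n n" and X: "X \<subseteq> carrier_vec n" and Y: "Y \<subseteq> carrier_vec n"
    and gens: "\<And>x. x \<in> X \<Longrightarrow> A *\<^sub>v x \<in> span Y" and x: "x \<in> span X"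
  shows "A *\<^sub>v x \<in> span Y"
proof -
  let ?H = "{x \<in> carrier_vec n. A *\<^sub>v x \<in> span Y}"
  have "submodule class_ring ?H V"
  proof (rule submodule.intro)
    show "Module.module class_ring V" by (rule vec_module)
    show "\<And>v w. v \<in> ?H \<Longrightarrow> w \<in> ?H \<Longrightarrow> v \<oplus>\<^bsub>V\<^esub> w \<in> ?H"
      using A Y by (auto simp: mult_add_distrib_mat_vec span_add1)
    have "0\<^sub>v n \<in> span Y" by (rule in_spanI[of _ "\<lambda>_. 0" "{}"]) (auto simp: lincomb_def)
    moreover have "A *\<^sub>v 0\<^sub>v n = 0\<^sub>v n" using A by (intro eq_vecI) auto
    ultimately show "\<zero>\<^bsub>V\<^esub> \<in> ?H" by simp
    show "\<And>c v. c \<in> carrier class_ring \<Longrightarrow> v \<in> ?H \<Longrightarrow> c \<odot>\<^bsub>V\<^esub> v \<in> ?H"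
      using A Y by (auto simp: mult_mat_vec smult_in_span)
  qed auto
  moreover have "X \<subseteq> ?H" using X gens by auto
  ultimately show ?thesis
    using span_is_subset x by blast
qed

lemma perturbed_power_in_span_krylov:
  assumes A: "A \<in> carrier_mat n n" and dA: "dA \<in> carrier_mat n n" and G: "G \<subseteq> carrier_vec n"
    and dA_range: "\<And>y. y \<in> carrier_vec n \<Longrightarrow> dA *\<^sub>v y \<in> span G" and x: "x \<in> span G"
  shows "((A + dA) ^\<^sub>m k) *\<^sub>v x \<in> span (krylov A G (Suc k))"
proof -
  have AdA: "A + dA \<in> carrier_mat n n" using A dA by simp
  have K: "krylov A G k \<subseteq> carrier_vec n" for k by (rule krylov_carrier[OF A G])
  have G_span: "span G \<subseteq> span (krylov A G (Suc k))" for k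
    using subset_krylov[OF A G] by (intro span_is_monotone) simp
  have xc: "x \<in> carrier_vec n" using x G span_closed by blast
  show ?thesis
  proof (induction k)
    case 0
    thus ?case using x G_span[of 0] A dA xc by auto
  next
    case (Suc k)
    have "(A + dA) *\<^sub>v y \<in> span (krylov A G (Suc (Suc k)))" if y: "y \<in> krylov A G (Suc k)" for y
    proof -
      have yc: "y \<in> carrier_vec n" using K y by blast
      have "A *\<^sub>v y \<in> span (krylov A G (Suc (Suc k)))"
        using mult_mat_vec_krylov[OF A G y] in_own_span[OF K] by blast
      moreover have "dA *\<^sub>v y \<in> span (krylov A G (Suc (Suc k)))" using dA_range[OF yc] G_span by blast
      ultimately show ?thesis using A dA yc K by (simp add: add_mult_distrib_mat_vec span_add1)
    qed
    hence "(A + dA) *\<^sub>v (((A + dA) ^\<^sub>m k) *\<^sub>v x) \<in> span (krylov A G (Suc (Suc k)))"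
      by (rule mult_mat_vec_in_span[OF AdA K K _ Suc.IH])
    thus ?case using pow_mat_Suc_mult_vec[OF AdA xc] by simp
  qed
qed

lemma in_span_unit_vecs:
  assumes x: "x \<in> carrier_vec n" and I: "I \<subseteq> {0..<n}"
    and supp: "\<And>i. i < n \<Longrightarrow> i \<notin> I \<Longrightarrow> x $ i = 0"
  shows "x \<in> span (unit_vec n ` I)"
proof -
  have fin: "finite (unit_vec n ` I)" using I finite_subset by auto
  have inj: "inj_on (unit_vec n) I" using I by (auto simp: inj_on_def unit_vec_eq)
  define a where "a = (\<lambda>u :: 'a vec. x $ (THE i. i < n \<and> u = unit_vec n i))"
  have a: "a (unit_vec n j) = x $ j" if "j \<in> I" for j
  proof -
    have "(THE i. i < n \<and> unit_vec n j = unit_vec n i) = j"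
      using that I by (intro the_equality) (auto simp: unit_vec_eq)
    thus ?thesis unfolding a_def by (rule arg_cong)
  qed
  have "lincomb a (unit_vec n ` I) = x"
  proof (rule eq_vecI)
    show "dim_vec (lincomb a (unit_vec n ` I)) = dim_vec x"
      using x lincomb_dim[OF fin] by (simp add: image_subset_iff)
    fix i assume "i < dim_vec x"
    hence i: "i < n" using x by auto
    have "lincomb a (unit_vec n ` I) $ i = (\<Sum>j\<in>I. a (unit_vec n j) * unit_vec n j $ i)"
      by (subst lincomb_index[OF i]) (auto simp: sum.reindex[OF inj])
    also have "\<dots> = (\<Sum>j\<in>I. if j = i then x $ i else 0)"
      using I i by (intro sum.cong) (auto simp: a)
    also have "\<dots> = x $ i"
      using supp[OF i] fin I by (cases "i \<in> I") (auto simp: finite_subset)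
    finally show "lincomb a (unit_vec n ` I) $ i = x $ i" .
  qed
  thus ?thesis using fin by (intro in_spanI[of x a "unit_vec n ` I"]) auto
qed

lemma span_index_eq_0:
  assumes X: "X \<subseteq> carrier_vec n" and i: "i < n" and zero: "\<And>x. x \<in> X \<Longrightarrow> x $ i = 0"
    and y: "y \<in> span X"
  shows "y $ i = 0"
proof -
  obtain a T where T: "y = lincomb a T" "finite T" "T \<subseteq> X" using in_spanE[OF y] by blast
  have "y $ i = (\<Sum>x\<in>T. a x * x $ i)"
    unfolding T(1) using T X by (intro lincomb_index[OF i]) auto
  also have "\<dots> = 0" using T zero by (intro sum.neutral) auto
  finally show ?thesis .
qed

lemma lin_indpt_singleton:
  assumes "c \<in> carrier_vec n" "c \<noteq> 0\<^sub>v n"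
  shows "lin_indpt {c}"
proof
  assume "lin_dep {c}"
  then have "c \<in> span {}" using lindep_span[of "{c}"] assms by auto
  thus False using span_empty assms by auto
qed

lemma rank_eq_iff_span_cols:
  assumes M: "M \<in> carrier_mat n nc"
  shows "rank M = n \<longleftrightarrow> span (set (cols M)) = carrier_vec n"
proof
  have C: "set (cols M) \<subseteq> carrier_vec n" using M cols_dim by blast
  assume r: "rank M = n"
  obtain S where S: "maximal S (\<lambda>T. T \<subseteq> set (cols M) \<and> lin_indpt T)"
    using maximal_exists[of "\<lambda>T. T \<subseteq> set (cols M) \<and> lin_indpt T" "card (set (cols M))" "{}"]
    by (meson List.finite_set card_mono empty_iff empty_subsetI finite_lin_indpt2 rev_finite_subset)
  have SM: "S \<subseteq> set (cols M)" "lin_indpt S" using S unfolding maximal_def by auto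
  have "card S = n" using rank_card_indpt[OF M S] r by simp
  hence "basis S"
    using SM C finite_subset[OF SM(1)] by (intro dim_li_is_basis) (auto simp: dim_is_n)
  hence "span S = carrier_vec n" unfolding basis_def by auto
  moreover have "span S \<subseteq> span (set (cols M))" using SM(1) span_is_monotone by auto
  ultimately show "span (set (cols M)) = carrier_vec n" using C span_is_subset2 by auto
next
  assume span: "span (set (cols M)) = carrier_vec n"
  have V: "vs (carrier_vec n) = V" by (simp add: module_vec_def)
  show "rank M = n" unfolding rank_def span V by (rule dim_is_n)
qed

lemma det_neq_0_iff_span_cols:
  assumes "M \<in> carrier_mat n n"
  shows "det M \<noteq> 0 \<longleftrightarrow> span (set (cols M)) = carrier_vec n"
  using det_rank_iff[OF assms] rank_eq_iff_span_cols[OF assms] by simp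

lemma unit_vecs_basis_completion:
  assumes U: "U \<subseteq> carrier_vec n" and li: "lin_indpt U" and fin: "finite U"
  obtains Q where "Q \<subseteq> {0..<n}" "span (U \<union> unit_vec n ` Q) = carrier_vec n" "card U + card Q = n"
proof -
  define P where "P Q \<longleftrightarrow> Q \<subseteq> {0..<n} \<and> lin_indpt (U \<union> unit_vec n ` Q) \<and> U \<inter> unit_vec n ` Q = {}"
    for Q
  have "finite Q \<and> card Q \<le> n" if "P Q" for Q
    using that finite_subset card_mono[of "{0..<n}" Q] unfolding P_def by auto
  moreover have "P {}" unfolding P_def using li by simp
  ultimately obtain Q where fQ: "finite Q" and max: "maximal Q P"
    using maximal_exists[of P n "{}"] by blast
  hence Q: "Q \<subseteq> {0..<n}" and liQ: "lin_indpt (U \<union> unit_vec n ` Q)"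
    and disj: "U \<inter> unit_vec n ` Q = {}"
    unfolding maximal_def P_def by auto
  have UQ: "U \<union> unit_vec n ` Q \<subseteq> carrier_vec n" using U Q by auto
  have "unit_vec n i \<in> span (U \<union> unit_vec n ` Q)" if i: "i < n" for i
  proof (cases "unit_vec n i \<in> U \<union> unit_vec n ` Q")
    case True
    thus ?thesis using in_own_span[OF UQ] by auto
  next
    case False
    have "insert i Q \<noteq> Q" using False by auto
    hence "\<not> P (insert i Q)" using max unfolding maximal_def by blast
    hence "lin_dep (U \<union> unit_vec n ` Q \<union> {unit_vec n i})"
      using Q i disj False unfolding P_def by (simp add: Un_assoc insert_commute)
    thus ?thesis using lin_dep_iff_in_span[OF UQ liQ _ False] by simp
  qed
  hence "span (set (unit_vecs n)) \<subseteq> span (U \<union> unit_vec n ` Q)"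
    using UQ by (intro span_subsetI) (auto simp: unit_vecs_def)
  hence span: "span (U \<union> unit_vec n ` Q) = carrier_vec n"
    using span_unit_vecs_is_carrier span_is_subset2[OF UQ] by auto
  have inj: "inj_on (unit_vec n) Q" using Q by (auto simp: inj_on_def unit_vec_eq)
  have "card (U \<union> unit_vec n ` Q) = card U + card Q"
    using card_Un_disjoint[OF fin _ disj] fQ card_image[OF inj] by auto
  moreover have "card (U \<union> unit_vec n ` Q) = n"
    using li_le_dim(2)[OF fin_dim UQ liQ] gen_ge_dim[OF _ UQ] span fin fQ
    by (simp add: dim_is_n le_antisym)
  ultimately show ?thesis using that Q span by simp
qed

lemma unit_vecs_in_span_if_triangular:
  fixes ps :: "nat list" and y :: "nat \<Rightarrow> 'a vec"
  assumes S: "S \<subseteq> carrier_vec n" and ps: "set ps \<subseteq> {0..<n}"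
    and y: "\<And>s. s < length ps \<Longrightarrow> y s \<in> span S"
    and diag: "\<And>s. s < length ps \<Longrightarrow> y s $ (ps ! s) \<noteq> 0"
    and supp: "\<And>s i. s < length ps \<Longrightarrow> i < n \<Longrightarrow> i \<notin> set (drop s ps) \<Longrightarrow> y s $ i = 0"
  shows "k < length ps \<Longrightarrow> unit_vec n (ps ! k) \<in> span S"
proof (induction "length ps - k" arbitrary: k rule: less_induct)
  case less
  define c where "c = y k $ (ps ! k)"
  define e :: "'a vec" where "e = unit_vec n (ps ! k)"
  define w where "w = y k - c \<cdot>\<^sub>v e"
  define I where "I = set (drop (Suc k) ps)"
  have yk: "y k \<in> carrier_vec n" using y[OF less.prems] S span_closed by blast
  have e: "e \<in> carrier_vec n" unfolding e_def by simp
  have psk: "ps ! k < n" using ps nth_mem[OF less.prems] by auto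
  have I: "I \<subseteq> {0..<n}" unfolding I_def using ps set_drop_subset[of "Suc k" ps] by blast
  have drop_k: "set (drop k ps) = insert (ps ! k) I"
    unfolding I_def Cons_nth_drop_Suc[OF less.prems, symmetric] by simp
  have "w $ i = 0" if i: "i < n" "i \<notin> I" for i
  proof (cases "i = ps ! k")
    case True
    thus ?thesis using yk e i by (simp add: w_def e_def c_def)
  next
    case False
    hence "y k $ i = 0" using supp[OF less.prems i(1)] drop_k i(2) by simp
    thus ?thesis using yk e i psk False by (simp add: w_def e_def)
  qed
  hence "w \<in> span (unit_vec n ` I)" using yk e I by (intro in_span_unit_vecs) (auto simp: w_def)
  moreover have "(unit_vec n ` I :: 'a vec set) \<subseteq> span S"
  proof
    fix u :: "'a vec" assume "u \<in> unit_vec n ` I"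
    then obtain x where x: "x \<in> set (drop (Suc k) ps)" "u = unit_vec n x" unfolding I_def by blast
    then obtain j where "j < length (drop (Suc k) ps)" "drop (Suc k) ps ! j = x"
      by (metis in_set_conv_nth)
    hence "Suc k + j < length ps" "x = ps ! (Suc k + j)" by auto
    thus "u \<in> span S" using less.hyps[of "Suc k + j"] x(2) by simp
  qed
  hence "span (unit_vec n ` I) \<subseteq> span S" using S I by (intro span_subsetI) auto
  ultimately have "y k - w \<in> span S" using span_diff[OF S y[OF less.prems]] by blast
  hence "(1 / c) \<cdot>\<^sub>v (y k - w) \<in> span S" by (rule smult_in_span[OF S])
  moreover have "(1 / c) \<cdot>\<^sub>v (y k - w) = e"
    using yk e diag[OF less.prems] by (intro eq_vecI) (auto simp: w_def c_def)
  ultimately show ?case unfolding e_def by simp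
qed

end

abbreviation vec_span :: "nat \<Rightarrow> 'a::field vec set \<Rightarrow> 'a vec set" where
  "vec_span n \<equiv> LinearCombinations.module.span class_ring (module_vec TYPE('a) n)"

lemma set_cols_ctrb_mat:
  assumes A: "A \<in> carrier_mat n n" and B: "B \<in> carrier_mat n m"
  shows "set (cols (ctrb_mat A B)) = krylov A (set (cols B)) n"
proof -
  have set_cols: "set (cols M) = col M ` {0..<dim_col M}" for M :: "'a mat"
    by (simp add: cols_def)
  have "set (cols ((A ^\<^sub>m k) * B)) = (\<lambda>c. (A ^\<^sub>m k) *\<^sub>v c) ` set (cols B)" for k
    unfolding set_cols image_image using A B by (auto intro!: image_cong col_mult2)
  hence "set (concat (map (\<lambda>k. cols ((A ^\<^sub>m k) * B)) [0..<n])) = krylov A (set (cols B)) n"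
    unfolding krylov_def by fastforce
  moreover have "krylov A (set (cols B)) n \<subseteq> carrier_vec n"
    using A B cols_dim[of B] by (intro krylov_carrier) auto
  ultimately show ?thesis unfolding ctrb_mat_def using A by simp
qed

lemma controllable_iff_span_krylov:
  assumes A: "A \<in> carrier_mat n n" and B: "B \<in> carrier_mat n m"
  shows "controllable A B \<longleftrightarrow> vec_span n (krylov A (set (cols B)) n) = carrier_vec n"
proof -
  have "ctrb_mat A B \<in> carrier_mat n (dim_col (ctrb_mat A B))"
    using A unfolding ctrb_mat_def by auto
  from vec_space.rank_eq_iff_span_cols[OF this] show ?thesis
    using A unfolding controllable_def mrank_def set_cols_ctrb_mat[OF A B] by simp
qed

lemma controllable_dim_0:
  assumes "A \<in> carrier_mat 0 0" "B \<in> carrier_mat 0 m"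
  shows "controllable A B"
proof -
  interpret vec_space "TYPE(real)" 0 .
  have "carrier_vec 0 = {0\<^sub>v 0 :: real vec}" by (auto intro!: eq_vecI)
  moreover have "0\<^sub>v 0 \<in> span (krylov A (set (cols B)) 0)"
    by (rule in_spanI[of _ "\<lambda>_. 0" "{}"]) (auto simp: lincomb_def)
  ultimately show ?thesis
    using controllable_iff_span_krylov[OF assms] span_is_subset2[of "krylov A (set (cols B)) 0"]
    unfolding krylov_def by auto
qed

lemma one_le_mrank:
  assumes M: "M \<in> carrier_mat n m" and "i < n" "j < m" "M $$ (i, j) \<noteq> 0"
  shows "1 \<le> mrank n M"
proof -
  interpret vec_space "TYPE(real)" n .
  have "col M j \<in> set (cols M)" using M assms(3) by (auto simp: cols_def)
  moreover have "col M j $ i \<noteq> 0" using M assms by simp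
  hence "col M j \<noteq> 0\<^sub>v n" using assms(2) by auto
  ultimately have "card {col M j} \<le> rank M"
    using M assms(3) by (intro rank_ge_card_indpt[OF M] lin_indpt_singleton) auto
  thus ?thesis unfolding mrank_def by simp
qed

lemma rank_basis_unit_vecs_completion:
  assumes B: "B \<in> carrier_mat n m"
  obtains U Q where "U \<subseteq> set (cols B)" "card U = mrank n B" "Q \<subseteq> {0..<n}"
    "vec_span n (U \<union> unit_vec n ` Q) = carrier_vec n" "card U + card Q = n"
proof -
  interpret vec_space "TYPE(real)" n .
  obtain U where U: "maximal U (\<lambda>T. T \<subseteq> set (cols B) \<and> lin_indpt T)"
    using maximal_exists[of "\<lambda>T. T \<subseteq> set (cols B) \<and> lin_indpt T" "card (set (cols B))" "{}"]
    by (meson List.finite_set card_mono empty_iff empty_subsetI finite_lin_indpt2 rev_finite_subset)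
  have UB: "U \<subseteq> set (cols B)" and li: "lin_indpt U" using U unfolding maximal_def by auto
  have "U \<subseteq> carrier_vec n" using UB B cols_dim[of B] by auto
  moreover have "finite U" using UB finite_subset by blast
  ultimately obtain Q where "Q \<subseteq> {0..<n}" "span (U \<union> unit_vec n ` Q) = carrier_vec n"
    "card U + card Q = n"
    using li unit_vecs_basis_completion by blast
  moreover have "card U = mrank n B" unfolding mrank_def using rank_card_indpt[OF B U] ..
  ultimately show ?thesis using that UB by blast
qed

definition nonzero_entries :: "'a::zero mat \<Rightarrow> (nat \<times> nat) set" where
  "nonzero_entries M = {(i, j). i < dim_row M \<and> j < dim_col M \<and> M $$ (i, j) \<noteq> 0}"

definition nonzero_rows :: "'a::zero mat \<Rightarrow> nat set" where
  "nonzero_rows M = fst ` nonzero_entries M"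

lemma nnz_eq_card_nonzero_entries: "nnz M = card (nonzero_entries M)"
  unfolding nnz_def nonzero_entries_def ..

lemma finite_nonzero_entries: "finite (nonzero_entries M)"
proof -
  have "nonzero_entries M \<subseteq> {0..<dim_row M} \<times> {0..<dim_col M}"
    unfolding nonzero_entries_def by auto
  thus ?thesis using finite_subset by blast
qed

lemma card_nonzero_rows_le_nnz: "card (nonzero_rows M) \<le> nnz M"
  unfolding nnz_eq_card_nonzero_entries nonzero_rows_def by (rule card_image_le[OF finite_nonzero_entries])

lemma nnz_hcat_le:
  assumes X: "X \<in> carrier_mat n a" and Y: "Y \<in> carrier_mat n b"
  shows "nnz (hcat X Y) \<le> nnz X + nnz Y"
proof -
  define shift where "shift = (\<lambda>(i, j). (i :: nat, j + a))"
  have "nonzero_entries (hcat X Y) \<subseteq> nonzero_entries X \<union> shift ` nonzero_entries Y"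
  proof
    fix x assume "x \<in> nonzero_entries (hcat X Y)"
    then obtain i j where x: "x = (i, j)" "i < n" "j < a + b" "hcat X Y $$ (i, j) \<noteq> 0"
      unfolding nonzero_entries_def using hcat_carrier[OF X Y] by auto
    show "x \<in> nonzero_entries X \<union> shift ` nonzero_entries Y"
    proof (cases "j < a")
      case True
      thus ?thesis using x X index_hcat[OF X Y x(2,3)] unfolding nonzero_entries_def by auto
    next
      case False
      hence "(i, j - a) \<in> nonzero_entries Y"
        using x Y index_hcat[OF X Y x(2,3)] unfolding nonzero_entries_def by auto
      moreover have "x = shift (i, j - a)" unfolding shift_def using x False by simp
      ultimately show ?thesis by blast
    qed
  qed
  hence "nnz (hcat X Y) \<le> card (nonzero_entries X \<union> shift ` nonzero_entries Y)"
    unfolding nnz_eq_card_nonzero_entries by (intro card_mono) (simp_all add: finite_nonzero_entries)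
  also have "\<dots> \<le> nnz X + card (shift ` nonzero_entries Y)"
    unfolding nnz_eq_card_nonzero_entries by (rule card_Un_le)
  also have "card (shift ` nonzero_entries Y) \<le> nnz Y"
    unfolding nnz_eq_card_nonzero_entries by (rule card_image_le[OF finite_nonzero_entries])
  finally show ?thesis by simp
qed

lemma nnz_zero_mat: "nnz (0\<^sub>m n m) = 0"
proof -
  have "nonzero_entries (0\<^sub>m n m :: real mat) = {}" unfolding nonzero_entries_def by auto
  thus ?thesis unfolding nnz_eq_card_nonzero_entries by simp
qed

lemma rc_le_nnz:
  assumes "A \<in> carrier_mat n n" "B \<in> carrier_mat n m"
    and "dA \<in> carrier_mat n n" "dB \<in> carrier_mat n m" "controllable (A + dA) (B + dB)"
  shows "rc A B \<le> nnz (hcat dA dB)"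
  unfolding rc_def using assms by (intro wellorder_Inf_le1) auto

lemma rc_attained:
  assumes A: "A \<in> carrier_mat n n" and B: "B \<in> carrier_mat n m"
    and "dA \<in> carrier_mat n n" "dB \<in> carrier_mat n m" "controllable (A + dA) (B + dB)"
  obtains dA' dB' where "dA' \<in> carrier_mat n n" "dB' \<in> carrier_mat n m"
    "controllable (A + dA') (B + dB')" "rc A B = nnz (hcat dA' dB')"
proof -
  let ?S = "{nnz (hcat dA dB) | dA dB. dA \<in> carrier_mat n n \<and> dB \<in> carrier_mat n m \<and>
      controllable (A + dA) (B + dB)}"
  have "rc A B = Inf ?S" unfolding rc_def using A B by simp
  moreover have "Inf ?S \<in> ?S" using assms by (intro Inf_nat_def1) blast
  ultimately show ?thesis using that by auto
qed

section \<open>The lower bound\<close>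

lemma controllable_hcat_id_cols_if_perturbation_rows:
  assumes A: "A \<in> carrier_mat n n" and B: "B \<in> carrier_mat n m"
    and dA: "dA \<in> carrier_mat n n" and dB: "dB \<in> carrier_mat n m" and J: "J \<subseteq> {0..<n}"
    and rows_dA: "\<And>i j. i < n \<Longrightarrow> j < n \<Longrightarrow> i \<notin> J \<Longrightarrow> dA $$ (i, j) = 0"
    and rows_dB: "\<And>i j. i < n \<Longrightarrow> j < m \<Longrightarrow> i \<notin> J \<Longrightarrow> dB $$ (i, j) = 0"
    and ctrl: "controllable (A + dA) (B + dB)"
  shows "controllable A (hcat B (id_cols n J))"
proof -
  interpret vec_space "TYPE(real)" n .
  have fin: "finite J" using J finite_subset by blast
  define G where "G = set (cols B) \<union> unit_vec n ` J"
  have G: "G \<subseteq> carrier_vec n" unfolding G_def using B cols_dim[of B] by auto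
  have K: "krylov A G n \<subseteq> carrier_vec n" by (rule krylov_carrier[OF A G])
  have supported: "x \<in> span G" if "x \<in> carrier_vec n" "\<And>i. i < n \<Longrightarrow> i \<notin> J \<Longrightarrow> x $ i = 0" for x
    using in_span_unit_vecs[OF that(1) J that(2)] span_is_monotone[of "unit_vec n ` J" G]
    unfolding G_def by blast
  have dA_range: "dA *\<^sub>v y \<in> span G" if "y \<in> carrier_vec n" for y
    using dA that rows_dA by (intro supported index_mult_mat_vec_eq_0[OF dA that]) auto
  have cols: "c \<in> span G" if c: "c \<in> set (cols (B + dB))" for c
  proof -
    obtain j where j: "j < m" "c = col B j + col dB j" using c B dB by (auto simp: cols_def)
    have "col B j \<in> span G" using B j in_own_span[OF G] unfolding G_def cols_def by auto
    moreover have "col dB j \<in> span G" using dB j rows_dB by (intro supported) auto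
    ultimately show ?thesis using j G by (simp add: span_add1)
  qed
  have "krylov (A + dA) (set (cols (B + dB))) n \<subseteq> span (krylov A G n)"
  proof
    fix x assume "x \<in> krylov (A + dA) (set (cols (B + dB))) n"
    then obtain k c where k: "k < n" "c \<in> set (cols (B + dB))" "x = ((A + dA) ^\<^sub>m k) *\<^sub>v c"
      unfolding krylov_def by blast
    have "x \<in> span (krylov A G (Suc k))"
      unfolding k(3) by (rule perturbed_power_in_span_krylov[OF A dA G dA_range cols[OF k(2)]])
    moreover have "span (krylov A G (Suc k)) \<subseteq> span (krylov A G n)"
      using k(1) krylov_mono[of "Suc k" n] by (intro span_is_monotone) auto
    ultimately show "x \<in> span (krylov A G n)" by blast
  qed
  moreover have "span (krylov (A + dA) (set (cols (B + dB))) n) = carrier_vec n"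
    using ctrl controllable_iff_span_krylov[of "A + dA" n "B + dB" m] A dA B dB by simp
  ultimately have "span (krylov A G n) = carrier_vec n" by (rule span_eq_carrier_vecI[OF K])
  thus ?thesis
    using controllable_iff_span_krylov[OF A hcat_carrier[OF B id_cols_carrier[OF fin]]]
    unfolding set_cols_hcat_id_cols[OF B fin] G_def by simp
qed

lemma Min_card_id_cols_le_rc:
  assumes A: "A \<in> carrier_mat n n" and B: "B \<in> carrier_mat n m"
    and "dA \<in> carrier_mat n n" "dB \<in> carrier_mat n m" "controllable (A + dA) (B + dB)"
  shows "Min {card J | J. J \<subseteq> {0..<n} \<and> controllable A (hcat B (id_cols n J))} \<le> rc A B"
proof -
  obtain dA dB where dA: "dA \<in> carrier_mat n n" and dB: "dB \<in> carrier_mat n m"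
    and ctrl: "controllable (A + dA) (B + dB)" and rc: "rc A B = nnz (hcat dA dB)"
    using rc_attained[OF A B assms(3-5)] by blast
  define J where "J = nonzero_rows (hcat dA dB)"
  have J: "J \<subseteq> {0..<n}"
    unfolding J_def nonzero_rows_def nonzero_entries_def using hcat_carrier[OF dA dB] by auto
  have "controllable A (hcat B (id_cols n J))"
  proof (rule controllable_hcat_id_cols_if_perturbation_rows[OF A B dA dB J _ _ ctrl])
    have row_in_J: "i \<in> J" if "i < n" "j < n + m" "hcat dA dB $$ (i, j) \<noteq> 0" for i j
    proof -
      have "(i, j) \<in> nonzero_entries (hcat dA dB)"
        using that hcat_carrier[OF dA dB] unfolding nonzero_entries_def by simp
      thus ?thesis unfolding J_def nonzero_rows_def by force
    qed
    show "dA $$ (i, j) = 0" if "i < n" "j < n" "i \<notin> J" for i j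
      using that row_in_J[of i j] index_hcat[OF dA dB, of i j] by auto
    show "dB $$ (i, j) = 0" if "i < n" "j < m" "i \<notin> J" for i j
      using that row_in_J[of i "n + j"] index_hcat[OF dA dB, of i "n + j"] by auto
  qed
  moreover have "finite {card J | J. J \<subseteq> {0..<n} \<and> controllable A (hcat B (id_cols n J))}"
    by (rule finite_subset[of _ "card ` Pow {0..<n}"]) auto
  ultimately have "Min {card J | J. J \<subseteq> {0..<n} \<and> controllable A (hcat B (id_cols n J))} \<le> card J"
    using J by (intro Min_le) auto
  also have "card J \<le> rc A B" unfolding J_def rc by (rule card_nonzero_rows_le_nnz)
  finally show ?thesis .
qed

section \<open>Shift matrices along a chain\<close>

definition chain_mat :: "nat \<Rightarrow> nat list \<Rightarrow> 'a::{zero,one} mat" where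
  "chain_mat n ps = mat n n (\<lambda>(i, j). if \<exists>k. Suc k < length ps \<and> i = ps ! Suc k \<and> j = ps ! k then 1 else 0)"

lemma chain_mat_dim [simp]: "dim_row (chain_mat n ps) = n" "dim_col (chain_mat n ps) = n"
  unfolding chain_mat_def by simp_all

lemma chain_mat_carrier: "chain_mat n ps \<in> carrier_mat n n"
  unfolding carrier_mat_def by simp

context
  fixes n :: nat and ps :: "nat list"
  assumes ps: "distinct ps" "set ps \<subseteq> {0..<n}"
begin

private lemma nth_less: "k < length ps \<Longrightarrow> ps ! k < n"
  using ps(2) nth_mem by fastforce

lemma index_chain_mat_mult_vec_Suc:
  fixes x :: "'a::comm_semiring_1 vec"
  assumes x: "x \<in> carrier_vec n" and k: "Suc k < length ps"
  shows "(chain_mat n ps *\<^sub>v x) $ (ps ! Suc k) = x $ (ps ! k)"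
proof -
  have entry: "(chain_mat n ps :: 'a mat) $$ (ps ! Suc k, j) = (if j = ps ! k then 1 else 0)"
    if "j < n" for j
  proof -
    have "(\<exists>k'. Suc k' < length ps \<and> ps ! Suc k = ps ! Suc k' \<and> j = ps ! k') \<longleftrightarrow> j = ps ! k"
      using k ps(1) nth_eq_iff_index_eq by fastforce
    thus ?thesis unfolding chain_mat_def using that nth_less k by simp
  qed
  have "(chain_mat n ps *\<^sub>v x) $ (ps ! Suc k) = (\<Sum>j = 0..<n. chain_mat n ps $$ (ps ! Suc k, j) * x $ j)"
    by (rule index_mult_mat_vec_eq_sum[OF chain_mat_carrier x nth_less[OF k]])
  also have "\<dots> = (\<Sum>j = 0..<n. if j = ps ! k then x $ j else 0)"
    by (intro sum.cong) (auto simp: entry)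
  also have "\<dots> = x $ (ps ! k)" using nth_less k by simp
  finally show ?thesis .
qed

lemma index_chain_mat_mult_vec_eq_0:
  fixes x :: "'a::comm_semiring_1 vec"
  assumes x: "x \<in> carrier_vec n" and i: "i < n" and not_succ: "\<And>k. Suc k < length ps \<Longrightarrow> i \<noteq> ps ! Suc k"
  shows "(chain_mat n ps *\<^sub>v x) $ i = 0"
proof (rule index_mult_mat_vec_eq_0[OF chain_mat_carrier x i])
  fix j assume "j < n"
  moreover have "\<not> (\<exists>k. Suc k < length ps \<and> i = ps ! Suc k \<and> j = ps ! k)" using not_succ by blast
  ultimately show "chain_mat n ps $$ (i, j) = 0" unfolding chain_mat_def using i by auto
qed

lemma index_chain_mat_pow_mult_vec:
  fixes x :: "'a::comm_semiring_1 vec"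
  assumes x: "x \<in> carrier_vec n"
  shows "k < length ps \<Longrightarrow>
    ((chain_mat n ps ^\<^sub>m s) *\<^sub>v x) $ (ps ! k) = (if s \<le> k then x $ (ps ! (k - s)) else 0)"
proof (induction s arbitrary: k)
  case 0
  thus ?case using x nth_less by (simp add: chain_mat_def)
next
  case (Suc s)
  let ?N = "chain_mat n ps :: 'a mat"
  have N: "?N \<in> carrier_mat n n" by (rule chain_mat_carrier)
  have y: "(?N ^\<^sub>m s) *\<^sub>v x \<in> carrier_vec n" using N x by (intro mult_mat_vec_carrier) auto
  note pow = pow_mat_Suc_mult_vec[OF N x, of s]
  show ?case
  proof (cases k)
    case 0
    have "ps ! 0 \<noteq> ps ! Suc k'" if "Suc k' < length ps" for k'
      using nth_eq_iff_index_eq[OF ps(1)] that Suc.prems 0 by fastforce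
    thus ?thesis
      unfolding pow using index_chain_mat_mult_vec_eq_0[OF y nth_less] Suc.prems 0 by simp
  next
    case (Suc k')
    thus ?thesis
      unfolding pow using index_chain_mat_mult_vec_Suc[OF y] Suc.IH[of k'] Suc.prems by simp
  qed
qed

lemma index_chain_mat_pow_mult_vec_outside:
  fixes x :: "'a::comm_semiring_1 vec"
  assumes x: "x \<in> carrier_vec n" and i: "i < n" "i \<notin> set ps"
  shows "((chain_mat n ps ^\<^sub>m Suc s) *\<^sub>v x) $ i = 0"
proof -
  have N: "(chain_mat n ps :: 'a mat) \<in> carrier_mat n n" by (rule chain_mat_carrier)
  have y: "(chain_mat n ps ^\<^sub>m s) *\<^sub>v x \<in> carrier_vec n" using N x by (intro mult_mat_vec_carrier) auto
  have "i \<noteq> ps ! Suc k" if "Suc k < length ps" for k using i(2) that nth_mem by metis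
  thus ?thesis
    unfolding pow_mat_Suc_mult_vec[OF N x] by (rule index_chain_mat_mult_vec_eq_0[OF y i(1)])
qed

lemma nnz_smult_chain_mat:
  assumes c: "c \<noteq> 0"
  shows "nnz (c \<cdot>\<^sub>m chain_mat n ps) = length ps - 1"
proof -
  define edge where "edge k = (ps ! Suc k, ps ! k)" for k
  have entry: "(chain_mat n ps :: real mat) $$ (i, j) \<noteq> 0 \<longleftrightarrow> (i, j) \<in> edge ` {k. Suc k < length ps}"
    if "i < n" "j < n" for i j
    using that unfolding chain_mat_def edge_def by auto
  have "nonzero_entries (c \<cdot>\<^sub>m chain_mat n ps) = edge ` {k. Suc k < length ps}"
  proof (intro equalityI subsetI)
    fix x assume "x \<in> edge ` {k. Suc k < length ps}"
    then obtain i j where "x = (i, j)" "(i, j) \<in> edge ` {k. Suc k < length ps}" by (metis prod.collapse)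
    moreover from this have "i < n" "j < n" unfolding edge_def using nth_less by auto
    ultimately show "x \<in> nonzero_entries (c \<cdot>\<^sub>m chain_mat n ps)"
      using entry c unfolding nonzero_entries_def by auto
  qed (use entry c in \<open>auto simp: nonzero_entries_def\<close>)
  moreover have "inj_on edge {k. Suc k < length ps}"
    unfolding edge_def inj_on_def using nth_eq_iff_index_eq[OF ps(1)] by auto
  moreover have "{k. Suc k < length ps} = {0..<length ps - 1}" by auto
  ultimately show ?thesis unfolding nnz_eq_card_nonzero_entries by (simp add: card_image)
qed
end

section \<open>Generic perturbations\<close>

lemma poly_entries_pow_mult_vec:
  fixes A N :: "real mat"
  assumes A: "A \<in> carrier_mat n n" and N: "N \<in> carrier_mat n n" and x: "x \<in> carrier_vec n"
  shows "\<exists>q. \<forall>e i. i < n \<longrightarrow> (((e \<cdot>\<^sub>m A + N) ^\<^sub>m s) *\<^sub>v x) $ i = poly (q i) e"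
proof (induction s)
  case 0
  have "((e \<cdot>\<^sub>m A + N) ^\<^sub>m 0) *\<^sub>v x = x" for e using N x by simp
  thus ?case by (intro exI[of _ "\<lambda>i. [:x $ i:]"]) simp
next
  case (Suc s)
  then obtain q where q: "\<And>e i. i < n \<Longrightarrow> (((e \<cdot>\<^sub>m A + N) ^\<^sub>m s) *\<^sub>v x) $ i = poly (q i) e"
    by blast
  define q' where "q' i = (\<Sum>j = 0..<n. [:N $$ (i, j), A $$ (i, j):] * q j)" for i
  have "(((e \<cdot>\<^sub>m A + N) ^\<^sub>m Suc s) *\<^sub>v x) $ i = poly (q' i) e" if i: "i < n" for e i
  proof -
    let ?X = "e \<cdot>\<^sub>m A + N"
    have X: "?X \<in> carrier_mat n n" using A N by simp
    have "(((e \<cdot>\<^sub>m A + N) ^\<^sub>m Suc s) *\<^sub>v x) $ i = (?X *\<^sub>v ((?X ^\<^sub>m s) *\<^sub>v x)) $ i"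
      using pow_mat_Suc_mult_vec[OF X x] by simp
    also have "\<dots> = (\<Sum>j = 0..<n. ?X $$ (i, j) * ((?X ^\<^sub>m s) *\<^sub>v x) $ j)"
      using X x i by (auto intro!: index_mult_mat_vec_eq_sum mult_mat_vec_carrier)
    also have "\<dots> = (\<Sum>j = 0..<n. poly ([:N $$ (i, j), A $$ (i, j):] * q j) e)"
      using i A N q by (intro sum.cong) (auto simp: algebra_simps)
    also have "\<dots> = poly (q' i) e" unfolding q'_def poly_sum ..
    finally show ?thesis .
  qed
  thus ?case by blast
qed

lemma det_poly_entries:
  fixes M :: "real \<Rightarrow> real mat"
  assumes M: "\<And>e. M e \<in> carrier_mat n n"
    and P: "\<And>e i j. i < n \<Longrightarrow> j < n \<Longrightarrow> M e $$ (i, j) = poly (P i j) e"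
  shows "\<exists>D. \<forall>e. det (M e) = poly D e"
proof -
  define D where "D = (\<Sum>p | p permutes {0..<n}. [:signof p:] * (\<Prod>i = 0..<n. P i (p i)))"
  have "det (M e) = poly D e" for e
  proof -
    have "det (M e) = (\<Sum>p | p permutes {0..<n}. signof p * (\<Prod>i = 0..<n. M e $$ (i, p i)))"
      by (rule det_def'[OF M])
    also have "\<dots> = (\<Sum>p | p permutes {0..<n}. poly ([:signof p:] * (\<Prod>i = 0..<n. P i (p i))) e)"
      using P permutes_in_image by (intro sum.cong refl) (fastforce simp: poly_prod intro!: prod.cong)
    also have "\<dots> = poly D e" unfolding D_def poly_sum ..
    finally show ?thesis .
  qed
  thus ?thesis by blast
qed

lemma exists_param_neq_0_span:
  fixes cs :: "real \<Rightarrow> real vec list"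
  assumes len: "\<And>e. length (cs e) = n" and carrier: "\<And>e. set (cs e) \<subseteq> carrier_vec n"
    and poly: "\<And>i j. i < n \<Longrightarrow> j < n \<Longrightarrow> \<exists>p. \<forall>e. cs e ! j $ i = poly p e"
    and span: "vec_span n (set (cs 0)) = carrier_vec n"
  obtains e where "e \<noteq> 0" "vec_span n (set (cs e)) = carrier_vec n"
proof -
  interpret vec_space "TYPE(real)" n .
  define M where "M e = mat_of_cols n (cs e)" for e
  have M: "M e \<in> carrier_mat n n" for e unfolding M_def using len mat_of_cols_carrier(1) by metis
  have cols: "cols (M e) = cs e" for e unfolding M_def using carrier by simp
  obtain P where "\<And>i j e. i < n \<Longrightarrow> j < n \<Longrightarrow> cs e ! j $ i = poly (P i j) e"
    using poly by metis
  hence "\<And>e i j. i < n \<Longrightarrow> j < n \<Longrightarrow> M e $$ (i, j) = poly (P i j) e"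
    unfolding M_def using len by (simp add: mat_of_cols_index)
  then obtain D where D: "\<And>e. det (M e) = poly D e" using det_poly_entries[of M n P] M by blast
  have "poly D 0 \<noteq> 0" using det_neq_0_iff_span_cols[OF M] span cols D by metis
  hence "finite {e. poly D e = 0}" by (intro poly_roots_finite) auto
  then obtain e :: real where "e \<notin> insert 0 {e. poly D e = 0}"
    using ex_new_if_finite[OF infinite_UNIV_char_0] by blast
  thus ?thesis using that det_neq_0_iff_span_cols[OF M] cols D by auto
qed

lemma exists_param_span_perturbed_powers:
  fixes A N :: "real mat" and U :: "real vec set"
  assumes A: "A \<in> carrier_mat n n" and N: "N \<in> carrier_mat n n" and b: "b \<in> carrier_vec n"
    and U: "U \<subseteq> carrier_vec n" "finite U" and card: "card U + L = n"
    and span: "vec_span n (U \<union> (\<lambda>s. (N ^\<^sub>m Suc s) *\<^sub>v b) ` {..<L}) = carrier_vec n"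
  obtains e where "e \<noteq> 0"
    "vec_span n (U \<union> (\<lambda>s. ((e \<cdot>\<^sub>m A + N) ^\<^sub>m Suc s) *\<^sub>v b) ` {..<L}) = carrier_vec n"
proof -
  obtain us where us: "set us = U" "distinct us" using finite_distinct_list[OF U(2)] by blast
  define cs where "cs e = us @ map (\<lambda>s. ((e \<cdot>\<^sub>m A + N) ^\<^sub>m Suc s) *\<^sub>v b) [0..<L]" for e
  have set_cs: "set (cs e) = U \<union> (\<lambda>s. ((e \<cdot>\<^sub>m A + N) ^\<^sub>m Suc s) *\<^sub>v b) ` {..<L}" for e
    unfolding cs_def using us by auto
  have len: "length (cs e) = n" for e unfolding cs_def using us card distinct_card by fastforce
  have carrier: "set (cs e) \<subseteq> carrier_vec n" for e
    unfolding set_cs using U A N b by (auto intro!: mult_mat_vec_carrier pow_carrier_mat simp del: pow_mat.simps)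
  have poly: "\<exists>p. \<forall>e. cs e ! j $ i = poly p e" if "i < n" "j < n" for i j
  proof (cases "j < length us")
    case True
    thus ?thesis unfolding cs_def by (intro exI[of _ "[:us ! j $ i:]"]) (simp add: nth_append)
  next
    case False
    obtain q where "\<forall>e i. i < n \<longrightarrow> (((e \<cdot>\<^sub>m A + N) ^\<^sub>m Suc (j - length us)) *\<^sub>v b) $ i = poly (q i) e"
      using poly_entries_pow_mult_vec[OF A N b] by blast
    moreover have "j - length us < L" using False that len[of 0] unfolding cs_def by simp
    hence "cs e ! j = ((e \<cdot>\<^sub>m A + N) ^\<^sub>m Suc (j - length us)) *\<^sub>v b" for e
      using False unfolding cs_def by (simp add: nth_append del: pow_mat.simps)
    ultimately show ?thesis using that(1) by metis
  qed
  have "0 \<cdot>\<^sub>m A + N = N" using A N by (intro eq_matI) auto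
  hence "vec_span n (set (cs 0)) = carrier_vec n" using span unfolding set_cs by simp
  then obtain e where e: "e \<noteq> 0" "vec_span n (set (cs e)) = carrier_vec n"
    using exists_param_neq_0_span[OF len carrier poly] by blast
  show ?thesis using that[OF e(1)] e(2) unfolding set_cs by simp
qed

lemma exists_scaled_perturbation_span:
  fixes A N :: "real mat" and U :: "real vec set"
  assumes A: "A \<in> carrier_mat n n" and N: "N \<in> carrier_mat n n" and b: "b \<in> carrier_vec n"
    and U: "U \<subseteq> carrier_vec n" "finite U" and card: "card U + L = n"
    and span: "vec_span n (U \<union> (\<lambda>s. (N ^\<^sub>m Suc s) *\<^sub>v b) ` {..<L}) = carrier_vec n"
  obtains e where "e \<noteq> 0"
    "vec_span n (U \<union> (\<lambda>s. ((A + (1 / e) \<cdot>\<^sub>m N) ^\<^sub>m Suc s) *\<^sub>v b) ` {..<L}) = carrier_vec n"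
proof -
  interpret vec_space "TYPE(real)" n .
  obtain e where e: "e \<noteq> 0"
    and span_e: "span (U \<union> (\<lambda>s. ((e \<cdot>\<^sub>m A + N) ^\<^sub>m Suc s) *\<^sub>v b) ` {..<L}) = carrier_vec n"
    by (rule exists_param_span_perturbed_powers[OF A N b U card span])
  define A' where "A' = A + (1 / e) \<cdot>\<^sub>m N"
  define T where "T = U \<union> (\<lambda>s. (A' ^\<^sub>m Suc s) *\<^sub>v b) ` {..<L}"
  have A': "A' \<in> carrier_mat n n" unfolding A'_def using A N by simp
  have T: "T \<subseteq> carrier_vec n"
    unfolding T_def using U A' b by (auto intro!: mult_mat_vec_carrier pow_carrier_mat simp del: pow_mat.simps)
  have "e \<cdot>\<^sub>m A + N = e \<cdot>\<^sub>m A'" unfolding A'_def using A N e by (intro eq_matI) (auto simp: field_simps)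
  hence scaled: "((e \<cdot>\<^sub>m A + N) ^\<^sub>m Suc s) *\<^sub>v b = e ^ Suc s \<cdot>\<^sub>v ((A' ^\<^sub>m Suc s) *\<^sub>v b)" for s
    using smult_mat_pow_mult_vec[OF A' b, of e "Suc s"] by (simp del: pow_mat.simps)
  have "U \<union> (\<lambda>s. ((e \<cdot>\<^sub>m A + N) ^\<^sub>m Suc s) *\<^sub>v b) ` {..<L} \<subseteq> span T"
  proof
    fix x assume "x \<in> U \<union> (\<lambda>s. ((e \<cdot>\<^sub>m A + N) ^\<^sub>m Suc s) *\<^sub>v b) ` {..<L}"
    then consider "x \<in> U" | s where "s < L" "x = ((e \<cdot>\<^sub>m A + N) ^\<^sub>m Suc s) *\<^sub>v b" by blast
    thus "x \<in> span T"
    proof cases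
      case 1
      thus ?thesis using in_own_span[OF T] unfolding T_def by blast
    next
      case 2
      have "(A' ^\<^sub>m Suc s) *\<^sub>v b \<in> span T" using 2(1) in_own_span[OF T] unfolding T_def by blast
      thus ?thesis unfolding 2(2) scaled by (rule smult_in_span[OF T])
    qed
  qed
  hence "span T = carrier_vec n" by (rule span_eq_carrier_vecI[OF T _ span_e])
  thus ?thesis using that[OF e] unfolding T_def A'_def by simp
qed

section \<open>The upper bound\<close>

lemma exists_index_neq_0_outside_unit_vecs:
  fixes U :: "real vec set"
  assumes U: "U \<subseteq> carrier_vec n" and Q: "Q \<subseteq> {0..<n}" "card Q < n"
    and span: "vec_span n (U \<union> unit_vec n ` Q) = carrier_vec n"
  obtains u p where "u \<in> U" "p < n" "p \<notin> Q" "u $ p \<noteq> 0"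
proof -
  interpret vec_space "TYPE(real)" n .
  obtain p where p: "p < n" "p \<notin> Q"
  proof -
    have "Q \<noteq> {0..<n}" using Q(2) by auto
    then obtain p where "p \<in> {0..<n}" "p \<notin> Q" using Q(1) by blast
    thus ?thesis using that by simp
  qed
  have UQ: "U \<union> unit_vec n ` Q \<subseteq> carrier_vec n" using U by auto
  have "unit_vec n p \<in> span (U \<union> unit_vec n ` Q)" using span p by simp
  moreover have "unit_vec n p $ p \<noteq> (0 :: real)" using p by simp
  ultimately have "\<not> (\<forall>x \<in> U \<union> unit_vec n ` Q. x $ p = 0)"
    using span_index_eq_0[OF UQ p(1)] by blast
  thus ?thesis using that p Q by (auto simp: subset_iff split: if_splits)
qed

lemma unit_vecs_in_span_chain_powers:
  fixes b :: "real vec"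
  assumes ps: "distinct ps" "set ps \<subseteq> {0..<n}" and p: "p < n" "p \<notin> set ps"
    and b: "b \<in> carrier_vec n" "b $ p \<noteq> 0"
  shows "unit_vec n ` set ps \<subseteq> vec_span n ((\<lambda>s. (chain_mat n (p # ps) ^\<^sub>m Suc s) *\<^sub>v b) ` {..<length ps})"
proof -
  interpret vec_space "TYPE(real)" n .
  let ?N = "chain_mat n (p # ps) :: real mat"
  let ?y = "\<lambda>s. (?N ^\<^sub>m Suc s) *\<^sub>v b"
  have ch: "distinct (p # ps)" "set (p # ps) \<subseteq> {0..<n}" using ps p by auto
  note pow = index_chain_mat_pow_mult_vec[OF ch b(1)]
  have Y: "?y ` {..<length ps} \<subseteq> carrier_vec n"
    using b chain_mat_carrier[of n "p # ps"] by (auto intro!: mult_mat_vec_carrier)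
  have "unit_vec n (ps ! k) \<in> span (?y ` {..<length ps})" if "k < length ps" for k
  proof (rule unit_vecs_in_span_if_triangular[OF Y ps(2) _ _ _ that])
    show "?y s \<in> span (?y ` {..<length ps})" if "s < length ps" for s
      using that in_own_span[OF Y] by blast
    show "?y s $ (ps ! s) \<noteq> 0" if "s < length ps" for s
      using pow[of "Suc s" "Suc s"] that b(2) by simp
    show "?y s $ i = 0" if i: "i < n" "i \<notin> set (drop s ps)" for s i
    proof -
      have "set ps = set (take s ps) \<union> set (drop s ps)" by (metis append_take_drop_id set_append)
      then consider "i = p" | "i \<notin> set (p # ps)" | "i \<in> set (take s ps)" using i(2) by auto
      thus ?thesis
      proof cases
        case 1
        thus ?thesis using pow[of 0 "Suc s"] by simp
      next
        case 2
        thus ?thesis using index_chain_mat_pow_mult_vec_outside[OF ch b(1) i(1)] by simp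
      next
        case 3
        then obtain j where "j < length (take s ps)" "take s ps ! j = i" by (metis in_set_conv_nth)
        hence "j < s" "Suc j < length (p # ps)" "i = (p # ps) ! Suc j" by auto
        thus ?thesis using pow[of "Suc j" "Suc s"] by simp
      qed
    qed
  qed
  thus ?thesis by (auto simp: in_set_conv_nth)
qed

lemma controllable_if_span_powers:
  assumes A: "A \<in> carrier_mat n n" and B: "B \<in> carrier_mat n m"
    and U: "U \<subseteq> set (cols B)" and b: "b \<in> set (cols B)" and L: "L < n"
    and span: "vec_span n (U \<union> (\<lambda>s. (A ^\<^sub>m Suc s) *\<^sub>v b) ` {..<L}) = carrier_vec n"
  shows "controllable A B"
proof -
  interpret vec_space "TYPE(real)" n .
  let ?K = "krylov A (set (cols B)) n"
  have K: "?K \<subseteq> carrier_vec n" using krylov_carrier[OF A] B cols_dim[of B] by simp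
  have "U \<subseteq> ?K" using U subset_krylov[OF A, of "set (cols B)" n] B cols_dim[of B] L by simp
  moreover have "(\<lambda>s. (A ^\<^sub>m Suc s) *\<^sub>v b) ` {..<L} \<subseteq> ?K"
  proof
    fix x assume "x \<in> (\<lambda>s. (A ^\<^sub>m Suc s) *\<^sub>v b) ` {..<L}"
    then obtain s where s: "s < L" and x: "x = (A ^\<^sub>m Suc s) *\<^sub>v b" by blast
    have "Suc s < n" using s L by simp
    thus "x \<in> ?K" unfolding krylov_def x using b by blast
  qed
  ultimately have "span ?K = carrier_vec n"
    using in_own_span[OF K] by (intro span_eq_carrier_vecI[OF K _ span]) blast
  thus ?thesis using controllable_iff_span_krylov[OF A B] by simp
qed

lemma exists_sparse_controllable_perturbation:
  assumes A: "A \<in> carrier_mat n n" and B: "B \<in> carrier_mat n m" and rank: "1 \<le> mrank n B"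
  obtains dA where "dA \<in> carrier_mat n n" "nnz dA \<le> n - mrank n B" "controllable (A + dA) B"
proof -
  interpret vec_space "TYPE(real)" n .
  obtain U Q where U: "U \<subseteq> set (cols B)" "card U = mrank n B" and Q: "Q \<subseteq> {0..<n}"
    and span: "span (U \<union> unit_vec n ` Q) = carrier_vec n" and card: "card U + card Q = n"
    by (rule rank_basis_unit_vecs_completion[OF B])
  have Uc: "U \<subseteq> carrier_vec n" using U(1) B cols_dim[of B] by auto
  have cardQ: "card Q < n" using card U(2) rank by linarith
  obtain b p where b: "b \<in> U" "b $ p \<noteq> 0" and p: "p < n" "p \<notin> Q"
    by (rule exists_index_neq_0_outside_unit_vecs[OF Uc Q cardQ span])
  have bc: "b \<in> carrier_vec n" using b Uc by auto
  define ps where "ps = sorted_list_of_set Q"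
  have "finite Q" using Q finite_subset by blast
  hence ps: "distinct ps" "set ps = Q" "length ps = card Q" unfolding ps_def by auto
  define N :: "real mat" where "N = chain_mat n (p # ps)"
  have N: "N \<in> carrier_mat n n" unfolding N_def by (rule chain_mat_carrier)
  let ?powers = "\<lambda>M. (\<lambda>s. (M ^\<^sub>m Suc s) *\<^sub>v b) ` {..<card Q}"
  have Q_span: "unit_vec n ` Q \<subseteq> span (?powers N)"
    using unit_vecs_in_span_chain_powers[of ps n p b] ps p Q bc b(2) unfolding N_def by auto
  have powers: "?powers M \<subseteq> carrier_vec n" if "M \<in> carrier_mat n n" for M
    using mult_mat_vec_carrier[OF pow_carrier_mat[OF that] bc] by blast
  have "U \<subseteq> span (U \<union> ?powers N)" using in_own_span[of "U \<union> ?powers N"] Uc powers[OF N] by blast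
  moreover have "span (?powers N) \<subseteq> span (U \<union> ?powers N)" by (rule span_is_monotone) blast
  ultimately have "U \<union> unit_vec n ` Q \<subseteq> span (U \<union> ?powers N)" using Q_span by blast
  hence "span (U \<union> ?powers N) = carrier_vec n"
    using Uc powers[OF N] by (intro span_eq_carrier_vecI[OF _ _ span]) blast+
  moreover have "finite U" using U(1) finite_subset by blast
  ultimately obtain e where e: "e \<noteq> 0" "span (U \<union> ?powers (A + (1 / e) \<cdot>\<^sub>m N)) = carrier_vec n"
    using exists_scaled_perturbation_span[OF A N bc Uc _ card] by blast
  define dA where "dA = (1 / e) \<cdot>\<^sub>m N"
  have dA: "dA \<in> carrier_mat n n" unfolding dA_def using N by simp
  have "controllable (A + dA) B"
    using controllable_if_span_powers[OF _ B U(1) _ cardQ] e(2) A dA b(1) U(1) unfolding dA_def by auto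
  moreover have "nnz dA = card Q"
    using nnz_smult_chain_mat[of "p # ps" n "1 / e"] ps p Q e(1) unfolding dA_def N_def by auto
  ultimately show ?thesis using that dA card U(2) by simp
qed

lemma rc_le_dim_minus_mrank:
  assumes A: "A \<in> carrier_mat n n" and B: "B \<in> carrier_mat n m" and rank: "1 \<le> mrank n B"
  shows "rc A B \<le> n - mrank n B"
proof -
  obtain dA where dA: "dA \<in> carrier_mat n n" "nnz dA \<le> n - mrank n B" "controllable (A + dA) B"
    by (rule exists_sparse_controllable_perturbation[OF A B rank])
  have "nnz (hcat dA (0\<^sub>m n m)) \<le> nnz dA"
    using nnz_hcat_le[OF dA(1), of "0\<^sub>m n m" m] nnz_zero_mat by simp
  moreover have "rc A B \<le> nnz (hcat dA (0\<^sub>m n m))" using rc_le_nnz[OF A B dA(1)] B dA(3) by simp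
  ultimately show ?thesis using dA(2) by simp
qed

lemma exists_controllable_perturbation_nnz_le_dim:
  assumes A: "A \<in> carrier_mat n n" and B: "B \<in> carrier_mat n m" and "0 < n" "0 < m"
  obtains dA dB where "dA \<in> carrier_mat n n" "dB \<in> carrier_mat n m"
    "controllable (A + dA) (B + dB)" "nnz (hcat dA dB) \<le> n"
proof -
  define E :: "real mat" where "E = mat n m (\<lambda>(i, j). if i = 0 \<and> j = 0 then 1 - B $$ (0, 0) else 0)"
  have E: "E \<in> carrier_mat n m" and BE: "B + E \<in> carrier_mat n m" unfolding E_def using B by auto
  have "nonzero_entries E \<subseteq> {(0, 0)}" unfolding nonzero_entries_def E_def by (auto split: if_splits)
  hence "card (nonzero_entries E) \<le> card {(0 :: nat, 0 :: nat)}" by (rule card_mono[rotated]) simp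
  hence nnz_E: "nnz E \<le> 1" unfolding nnz_eq_card_nonzero_entries by simp
  have "(B + E) $$ (0, 0) = 1" unfolding E_def using B assms(3,4) by simp
  hence "1 \<le> mrank n (B + E)" using assms(3,4) by (intro one_le_mrank[OF BE]) auto
  then obtain dA where dA: "dA \<in> carrier_mat n n" "nnz dA \<le> n - mrank n (B + E)"
    "controllable (A + dA) (B + E)"
    by (rule exists_sparse_controllable_perturbation[OF A BE])
  have "nnz (hcat dA E) \<le> nnz dA + nnz E" by (rule nnz_hcat_le[OF dA(1) E])
  hence "nnz (hcat dA E) \<le> n" using dA(2) nnz_E \<open>1 \<le> mrank n (B + E)\<close> assms(3) by linarith
  thus ?thesis using that dA(1,3) E by blast
qed

theorem theorem4:
  fixes A B :: "real mat" and n m :: nat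
  assumes "A \<in> carrier_mat n n" and "B \<in> carrier_mat n m" and "m \<ge> 1"
    and "\<not> controllable A B"
  shows "(mrank n B \<ge> 1 \<longrightarrow> rc A B \<le> n - mrank n B)
       \<and> (mrank n B = 0 \<longrightarrow> rc A B \<le> n)
       \<and> rc A B \<ge> Min {card J | J. J \<subseteq> {0..<n} \<and> controllable A (hcat B (id_cols n J))}"
proof -
  note A = assms(1) and B = assms(2)
  have "0 < n" using controllable_dim_0[of A B m] A B assms(4) by (cases n) auto
  then obtain dA dB where perturbation: "dA \<in> carrier_mat n n" "dB \<in> carrier_mat n m"
    "controllable (A + dA) (B + dB)" "nnz (hcat dA dB) \<le> n"
    using exists_controllable_perturbation_nnz_le_dim[OF A B] assms(3) by auto
  have "rc A B \<le> n" using rc_le_nnz[OF A B perturbation(1-3)] perturbation(4) by simp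
  thus ?thesis
    using rc_le_dim_minus_mrank[OF A B] Min_card_id_cols_le_rc[OF A B perturbation(1-3)] by simp
qed

end
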